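(* Let $X\in\mathbb{R}^{n\times m}$ be a random matrix with independent centered entries that are sub-Poisson with variance proxy $\sigma^2$, and let $A\in\mathbb{R}^{n\times m}$ be deterministic with $|A_{ij}|\le\sigma^2$ for all $i,j$. Then for all $t\ge1$, $$\Pr\Big(\|AX^\top\|_F\ge34(1+t)\,n\sigma^2\big(\sqrt{m\sigma^2}\vee\tfrac23\big)\Big)\le\frac{n}{(en)^t}.$$
   Context: A real random variable $Y$ is sub-Poisson with variance proxy $\sigma^2\ge0$ if $\mathbb{E}e^{\lambda(Y-\mathbb{E}Y)}\le\exp\{\sigma^2(e^{|\lambda|}-1-|\lambda|)\}$ for all $\lambda\in\mathbb{R}$. $\|\cdot\|_F$ is the Frobenius norm, $\vee=\max$. *)

theory Defs
  imports "HOL-Probability.Probability"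
begin

definition sub_poisson :: "'a measure \<Rightarrow> ('a \<Rightarrow> real) \<Rightarrow> real \<Rightarrow> bool" where
  "sub_poisson M Y s2 \<longleftrightarrow> s2 \<ge> 0 \<and> Y \<in> borel_measurable M \<and> integrable M Y \<and>
     (\<forall>l::real. integrable M (\<lambda>x. exp (l * (Y x - integral\<^sup>L M Y))) \<and>
        integral\<^sup>L M (\<lambda>x. exp (l * (Y x - integral\<^sup>L M Y)))
          \<le> exp (s2 * (exp \<bar>l\<bar> - 1 - \<bar>l\<bar>)))"

text \<open>Frobenius norm of the n x n matrix A X^T, where A, X are n x m matrices
  given as functions on indices i < n, j < m: (A X^T)_{ik} = sum_j A_ij X_kj.\<close>
definition frob_ABt :: "nat \<Rightarrow> nat \<Rightarrow> (nat \<Rightarrow> nat \<Rightarrow> real) \<Rightarrow> (nat \<Rightarrow> nat \<Rightarrow> real) \<Rightarrow> real" where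
  "frob_ABt n m A B = sqrt (\<Sum>i<n. \<Sum>k<n. (\<Sum>j<m. A i j * B k j)\<^sup>2)"

end

theory Submission
  imports Defs
begin

(* Write B = A / sigma^2, so that |B_ij| <= 1 and ||A X^T||_F = sigma^2 ||W||_F with
  W_ik = sum_j B_ij X_kj.  If ||W||_F^2 >= n N, some row i has sum_k W_ik^2 >= N.  Then either
  an entry is large, |W_ik| >= r, which a Chernoff bound for the sub-Poisson linear form W_ik
  makes unlikely; or theta |W_ik| <= theta r = c for all k, and cosh u >= exp (u^2 / (2 c)) for
  |u| <= c gives prod_k cosh (theta W_ik) >= exp (theta^2 N / (2 c)), which Markov's inequality
  makes unlikely: expanding the product of cosh's into 2^n exponentials of linear forms in the
  independent entries of X bounds its expectation by exp (n m sigma^2 (e^theta - 1 - theta)).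
  A union bound over i and k with kappa = max (sqrt (m sigma^2)) (2/3), l = 1 + ln n,
  c = 34 (1 + t), theta = sqrt (l / n) / kappa, r = c kappa sqrt (n / l) and N = c^2 n kappa^2
  gives the claim. *)

lemma exp_minus_1_minus_mono:
  fixes a b :: real
  assumes "0 \<le> a" "a \<le> b"
  shows "exp a - 1 - a \<le> exp b - 1 - b"
proof -
  have "exp a * (1 + (b - a)) \<le> exp a * exp (b - a)"
    by (intro mult_left_mono) auto
  also have "\<dots> = exp b"
    by (simp add: exp_diff)
  finally have "exp a + exp a * (b - a) \<le> exp b"
    by (simp add: algebra_simps)
  moreover have "1 * (b - a) \<le> exp a * (b - a)"
    using assms by (intro mult_right_mono) auto
  ultimately show ?thesis
    by simp
qed

lemma exp_minus_1_minus_le_sq: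
  fixes x :: real
  assumes "0 \<le> x"
  shows "exp x - 1 - x \<le> x\<^sup>2 * exp x / 2"
proof -
  let ?h = "\<lambda>y::real. y\<^sup>2 / 2 - 1 + exp (-y) * (1 + y)"
  have "?h 0 \<le> ?h x"
  proof (rule DERIV_nonneg_imp_nondecreasing[OF assms])
    fix y :: real
    assume "0 \<le> y" "y \<le> x"
    have "DERIV ?h y :> y * (1 - exp (-y))"
      by (auto intro!: derivative_eq_intros simp: algebra_simps power2_eq_square)
    moreover have "0 \<le> y * (1 - exp (-y))"
      using \<open>0 \<le> y\<close> by simp
    ultimately show "\<exists>d. DERIV ?h y :> d \<and> 0 \<le> d"
      by blast
  qed
  then have "0 \<le> exp x * ?h x"
    by simp
  also have "exp x * ?h x = x\<^sup>2 * exp x / 2 - exp x + (1 + x)"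
    by (simp add: algebra_simps exp_minus)
  finally show ?thesis
    by simp
qed

lemma exp_3_halves_le_6: "exp (3/2 :: real) \<le> 6"
proof -
  have "exp (3/4 :: real) ^ 2 \<le> (1 + 3/4 + (3/4)\<^sup>2) ^ 2"
    using exp_bound[of "3/4 :: real"] by (intro power_mono) auto
  moreover have "exp (3/4 :: real) ^ 2 = exp (3/2)"
    by (simp flip: exp_of_nat_mult)
  ultimately show ?thesis
    by (simp add: power2_eq_square)
qed

lemma exp_4_fifths_ge_2: "2 \<le> exp (4/5 :: real)"
proof -
  have "(6/5) ^ 4 \<le> exp (1/5 :: real) ^ 4"
    using exp_ge_add_one_self[of "1/5 :: real"] by (intro power_mono) auto
  also have "\<dots> = exp (4/5)"
    by (simp flip: exp_of_nat_mult)
  finally show ?thesis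
    by (simp add: power_numeral_reduce)
qed

lemma exp_minus_1_minus_scaled_le:
  fixes v \<kappa> \<theta> :: real
  assumes "0 \<le> v" "v \<le> \<kappa>\<^sup>2" "2/3 \<le> \<kappa>" "0 \<le> \<theta>" "\<kappa> * \<theta> \<le> 1"
  shows "v * (exp \<theta> - 1 - \<theta>) \<le> 3 * (\<kappa> * \<theta>)\<^sup>2"
proof -
  have "2/3 * \<theta> \<le> \<kappa> * \<theta>"
    using assms(3,4) by (rule mult_right_mono)
  then have "\<theta> \<le> 3/2"
    using assms(5) by linarith
  then have "exp \<theta> \<le> 6"
    using exp_3_halves_le_6 by (meson exp_le_cancel_iff order_trans)
  have "0 \<le> exp \<theta> - 1 - \<theta>"
    using exp_ge_add_one_self[of \<theta>] by linarith
  then have "v * (exp \<theta> - 1 - \<theta>) \<le> \<kappa>\<^sup>2 * (\<theta>\<^sup>2 * exp \<theta> / 2)"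
    using assms exp_minus_1_minus_le_sq[OF assms(4)] by (intro mult_mono) auto
  also have "\<dots> \<le> \<kappa>\<^sup>2 * (\<theta>\<^sup>2 * 6 / 2)"
    using \<open>exp \<theta> \<le> 6\<close> by (intro mult_left_mono divide_right_mono) auto
  finally show ?thesis
    by (simp add: power_mult_distrib)
qed

lemma cosh_ge_1_plus_sq_half:
  fixes u :: real
  shows "1 + u\<^sup>2 / 2 \<le> cosh u"
proof -
  let ?f = "\<lambda>y::real. cosh y - 1 - y\<^sup>2 / 2"
  have "?f 0 \<le> ?f \<bar>u\<bar>"
  proof (rule DERIV_nonneg_imp_nondecreasing[of 0])
    fix y :: real
    assume "0 \<le> y" "y \<le> \<bar>u\<bar>"
    have "DERIV ?f y :> sinh y - y"
      by (auto intro!: derivative_eq_intros)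
    moreover have "0 \<le> sinh y - y"
      using real_le_x_sinh[OF \<open>0 \<le> y\<close>] by (simp add: sinh_field_def exp_minus)
    ultimately show "\<exists>d. DERIV ?f y :> d \<and> 0 \<le> d"
      by blast
  qed simp
  then show ?thesis
    by (simp add: cosh_real_abs)
qed

lemma exp_sq_div_le_cosh:
  fixes u U :: real
  assumes "\<bar>u\<bar> \<le> U" "2 \<le> U"
  shows "exp (u\<^sup>2 / (2 * U)) \<le> cosh u"
proof (cases "8/5 \<le> \<bar>u\<bar>")
  case True
  have "u\<^sup>2 = \<bar>u\<bar> * \<bar>u\<bar>"
    by (simp add: power2_eq_square)
  also have "\<dots> \<le> \<bar>u\<bar> * U"
    using assms by (intro mult_left_mono) auto
  finally have "exp (u\<^sup>2 / (2 * U)) \<le> exp (\<bar>u\<bar> / 2)"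
    using assms by (simp add: field_simps)
  also have "\<dots> \<le> exp (\<bar>u\<bar> / 2) * exp (\<bar>u\<bar> / 2) / 2"
  proof -
    have "exp (4/5) \<le> exp (\<bar>u\<bar> / 2)"
      using True by simp
    with exp_4_fifths_ge_2 have "2 \<le> exp (\<bar>u\<bar> / 2)"
      by linarith
    then show ?thesis
      by simp
  qed
  also have "\<dots> = exp \<bar>u\<bar> / 2"
    by (simp flip: exp_add)
  also have "\<dots> \<le> cosh u"
    by (simp add: cosh_field_def abs_if)
  finally show ?thesis .
next
  case False
  define x where "x = u\<^sup>2 / (2 * U)"
  have "0 \<le> x"
    using assms by (simp add: x_def)
  moreover have "x \<le> u\<^sup>2 / 4"
    unfolding x_def using assms by (intro divide_left_mono) auto
  moreover have "u\<^sup>2 \<le> (8/5)\<^sup>2"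
    using False abs_le_square_iff[of u "8/5"] by simp
  ultimately have "x \<le> 16/25"
    by (simp add: power2_eq_square)
  have "exp x \<le> 1 + x + x\<^sup>2"
    using exp_bound[OF \<open>0 \<le> x\<close>] \<open>x \<le> 16/25\<close> by simp
  also have "\<dots> \<le> 1 + 2 * x"
    using \<open>0 \<le> x\<close> \<open>x \<le> 16/25\<close> by (simp add: power2_eq_square mult_right_le_one_le)
  also have "\<dots> \<le> 1 + u\<^sup>2 / 2"
    using \<open>x \<le> u\<^sup>2 / 4\<close> by simp
  also have "\<dots> \<le> cosh u"
    by (rule cosh_ge_1_plus_sq_half)
  finally show ?thesis
    unfolding x_def .
qed

lemma exp_sum_sq_le_prod_cosh:
  fixes w :: "'k \<Rightarrow> real"
  assumes "finite K" "2 \<le> c" "\<And>k. k \<in> K \<Longrightarrow> \<bar>w k\<bar> \<le> c"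
  shows "exp ((\<Sum>k\<in>K. (w k)\<^sup>2) / (2 * c)) \<le> (\<Prod>k\<in>K. cosh (w k))"
proof -
  have "exp ((\<Sum>k\<in>K. (w k)\<^sup>2) / (2 * c)) = (\<Prod>k\<in>K. exp ((w k)\<^sup>2 / (2 * c)))"
    by (simp add: exp_sum[OF assms(1), symmetric] sum_divide_distrib)
  also have "\<dots> \<le> (\<Prod>k\<in>K. cosh (w k))"
    using assms(2,3) by (intro prod_mono conjI exp_sq_div_le_cosh) auto
  finally show ?thesis .
qed

lemma sum_sq_ge_imp_cosh_large:
  fixes w :: "'k \<Rightarrow> real"
  assumes "finite K" "0 \<le> \<theta>" "0 \<le> \<eta>" "2 \<le> c" "\<theta> * r \<le> c" "N \<le> (\<Sum>k\<in>K. (w k)\<^sup>2)"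
  shows "exp (\<theta>\<^sup>2 * N / (2 * c)) \<le> (\<Prod>k\<in>K. cosh (\<theta> * w k))
    \<or> (\<exists>k\<in>K. exp (\<eta> * r) / 2 \<le> cosh (\<eta> * w k))"
proof (cases "\<exists>k\<in>K. r < \<bar>w k\<bar>")
  case True
  then obtain k where "k \<in> K" "r < \<bar>w k\<bar>"
    by blast
  then have "exp (\<eta> * r) \<le> exp \<bar>\<eta> * w k\<bar>"
    using assms(3) by (simp add: abs_mult mult_left_mono)
  also have "\<dots> \<le> 2 * cosh (\<eta> * w k)"
    by (simp add: cosh_field_def abs_if)
  finally have "exp (\<eta> * r) / 2 \<le> cosh (\<eta> * w k)"
    by simp
  with \<open>k \<in> K\<close> show ?thesis
    by blast
next
  case False
  then have "\<bar>\<theta> * w k\<bar> \<le> c" if "k \<in> K" for k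
    using that assms(2,5) by (simp add: abs_mult) (meson mult_left_mono not_less order_trans)
  with assms(1,4) have "exp ((\<Sum>k\<in>K. (\<theta> * w k)\<^sup>2) / (2 * c)) \<le> (\<Prod>k\<in>K. cosh (\<theta> * w k))"
    by (rule exp_sum_sq_le_prod_cosh)
  moreover have "\<theta>\<^sup>2 * N \<le> (\<Sum>k\<in>K. (\<theta> * w k)\<^sup>2)"
    using assms(6) by (simp add: power_mult_distrib sum_distrib_left[symmetric] mult_left_mono)
  then have "exp (\<theta>\<^sup>2 * N / (2 * c)) \<le> exp ((\<Sum>k\<in>K. (\<theta> * w k)\<^sup>2) / (2 * c))"
    using assms(4) by (simp add: divide_right_mono)
  ultimately show ?thesis
    by linarith
qed

lemma prod_cosh_eq_sum_exp:
  fixes f :: "'k \<Rightarrow> real"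
  assumes "finite K"
  shows "(\<Prod>k\<in>K. cosh (f k))
    = (\<Sum>S\<in>Pow K. exp (\<Sum>k\<in>K. if k \<in> S then f k else - f k)) / 2 ^ card K"
proof -
  have "(\<Prod>k\<in>K. cosh (f k)) = (\<Prod>k\<in>K. exp (f k) + exp (- f k)) / 2 ^ card K"
    by (simp add: cosh_field_def prod_dividef)
  also have "(\<Prod>k\<in>K. exp (f k) + exp (- f k))
      = (\<Sum>S\<in>Pow K. (\<Prod>k\<in>S. exp (f k)) * (\<Prod>k\<in>K - S. exp (- f k)))"
    by (rule prod_add[OF assms])
  also have "\<dots> = (\<Sum>S\<in>Pow K. exp (\<Sum>k\<in>K. if k \<in> S then f k else - f k))"
  proof (intro sum.cong refl)
    fix S
    assume "S \<in> Pow K"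
    then have "K \<inter> S = S" "K \<inter> - S = K - S"
      by auto
    then show "(\<Prod>k\<in>S. exp (f k)) * (\<Prod>k\<in>K - S. exp (- f k))
        = exp (\<Sum>k\<in>K. if k \<in> S then f k else - f k)"
      by (simp add: exp_sum[OF assms] if_distrib[of exp] prod.If_cases[OF assms])
  qed
  finally show ?thesis .
qed

lemma one_plus_ln_bounds:
  fixes n :: nat and l :: real
  assumes "1 \<le> n"
  defines "l \<equiv> 1 + ln (real n)"
  shows "1 \<le> l" "l \<le> real n" "l + 2 \<le> 34 * sqrt (real n / l)"
proof -
  show "1 \<le> l" "l \<le> real n"
    using assms ln_le_minus_one[of "real n"] by (auto simp: l_def)
  define r where "r = sqrt (sqrt (real n))"
  have "1 \<le> r"
    using assms by (simp add: r_def)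
  have r4: "r ^ 4 = real n"
  proof -
    have "r ^ 4 = (r\<^sup>2)\<^sup>2"
      by (simp flip: power_mult)
    then show ?thesis
      by (simp add: r_def)
  qed
  have "ln (real n) = 4 * ln r"
    using \<open>1 \<le> r\<close> by (simp flip: r4 add: ln_realpow)
  also have "\<dots> \<le> 4 * (r - 1)"
    using ln_le_minus_one[of r] \<open>1 \<le> r\<close> by simp
  finally have "l \<le> 4 * r"
    by (simp add: l_def)
  have "l * (l + 2)\<^sup>2 \<le> (4 * r) * (6 * r)\<^sup>2"
    using \<open>1 \<le> l\<close> \<open>l \<le> 4 * r\<close> \<open>1 \<le> r\<close> by (intro mult_mono power_mono) auto
  also have "\<dots> = 144 * r ^ 3"
    by (simp add: power2_eq_square power3_eq_cube)
  also have "\<dots> \<le> 144 * r ^ 4"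
    using \<open>1 \<le> r\<close> by (simp add: power_increasing)
  finally have "(l + 2)\<^sup>2 \<le> 34\<^sup>2 * (real n / l)"
    using \<open>1 \<le> l\<close> r4 by (simp add: field_simps)
  then show "l + 2 \<le> 34 * sqrt (real n / l)"
    by (metis real_le_rsqrt real_sqrt_mult real_sqrt_pow2_iff zero_le_numeral zero_le_power2 real_sqrt_abs abs_numeral)
qed

lemma frobenius_tail_terms_le:
  fixes n :: nat and t l c x y :: real
  defines "l \<equiv> 1 + ln (real n)" and "c \<equiv> 34 * (1 + t)"
  assumes "1 \<le> n" "1 \<le> t" "x \<le> 3 * l" "y \<le> 3"
  shows "exp (x - c * l / 2) + n * (2 * exp (y - c * sqrt (n / l))) \<le> 1 / (exp 1 * n) powr t"
proof -
  note l = one_plus_ln_bounds[OF assms(3), folded l_def]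
  have "0 \<le> t * l"
    using assms(4) l(1) by simp
  have "ln 4 = 2 * ln (2 :: real)"
    using ln_realpow[of 2 2] by simp
  then have "ln 4 \<le> (2 :: real)"
    using ln_2_less_1 by simp
  have "ln 2 + (x - c * l / 2) \<le> - (t * l)"
    using \<open>0 \<le> t * l\<close> \<open>x \<le> 3 * l\<close> ln_2_less_1 l(1) by (simp add: c_def algebra_simps)
  then have "exp (ln 2 + (x - c * l / 2)) \<le> exp (- (t * l))"
    by simp
  then have first: "2 * exp (x - c * l / 2) \<le> exp (- (t * l))"
    by (simp add: exp_add)
  have "(1 + t) * (l + 2) \<le> (1 + t) * (34 * sqrt (n / l))"
    using l(3) assms(4) by (intro mult_left_mono) auto
  then have "ln 4 + (l - 1) + y - c * sqrt (n / l) \<le> - (t * l)"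
    using \<open>ln 4 \<le> 2\<close> \<open>y \<le> 3\<close> assms(4) by (simp add: c_def algebra_simps)
  then have "exp (ln 4 + (l - 1) + y - c * sqrt (n / l)) \<le> exp (- (t * l))"
    by simp
  moreover have "exp (ln 4 + (l - 1) + y - c * sqrt (n / l)) = 2 * (n * (2 * exp (y - c * sqrt (n / l))))"
    using assms(3) by (simp add: exp_add exp_diff l_def)
  ultimately have second: "2 * (n * (2 * exp (y - c * sqrt (n / l)))) \<le> exp (- (t * l))"
    by linarith
  have "(exp 1 * n) powr t = exp (t * l)"
    using assms(3) by (simp add: powr_def ln_mult l_def mult.commute)
  then have "1 / (exp 1 * n) powr t = exp (- (t * l))"
    by (simp add: exp_minus inverse_eq_divide)
  with first second show ?thesis
    by linarith
qed

lemma frobenius_tail_parameters: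
  fixes n :: nat and t v \<kappa> :: real
  assumes "1 \<le> n" "1 \<le> t" "0 \<le> v" "v \<le> \<kappa>\<^sup>2" "2/3 \<le> \<kappa>"
  obtains \<theta> \<eta> r N :: real where "0 \<le> \<theta>" "0 \<le> \<eta>" "\<theta> * r = 34 * (1 + t)"
    and "(34 * (1 + t) * n * \<kappa>)\<^sup>2 = n * N"
    and "exp (n * v * (exp \<theta> - 1 - \<theta>) - \<theta>\<^sup>2 * N / (2 * (34 * (1 + t))))
      + n * (2 * exp (v * (exp \<eta> - 1 - \<eta>) - \<eta> * r)) \<le> 1 / (exp 1 * n) powr t"
proof -
  define l where "l = 1 + ln (real n)"
  define c where "c = 34 * (1 + t)"
  define \<theta> where "\<theta> = sqrt (l / n) / \<kappa>"
  define \<eta> where "\<eta> = 1 / \<kappa>"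
  define r where "r = c * \<kappa> * sqrt (n / l)"
  define N where "N = c\<^sup>2 * n * \<kappa>\<^sup>2"
  note l = one_plus_ln_bounds[OF assms(1), folded l_def]
  have \<theta>: "0 \<le> \<theta>" "\<kappa> * \<theta> \<le> 1" "(\<kappa> * \<theta>)\<^sup>2 = l / n"
    using assms(5) l(1,2) by (auto simp: \<theta>_def)
  have \<eta>: "0 \<le> \<eta>" "\<kappa> * \<eta> = 1" "\<eta> * r = c * sqrt (n / l)"
    using assms(5) by (auto simp: \<eta>_def r_def)
  have "sqrt (l / n) * sqrt (n / l) = 1"
    using l(1) assms(1) by (simp flip: real_sqrt_mult)
  moreover have "\<theta> * r = c * (sqrt (l / n) * sqrt (n / l))"
    using assms(5) by (simp add: \<theta>_def r_def)
  ultimately have "\<theta> * r = c"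
    by simp
  have "\<theta>\<^sup>2 * N / (2 * c) = (\<kappa> * \<theta>)\<^sup>2 * n * c / 2"
    using assms(2) by (simp add: N_def c_def power_mult_distrib power2_eq_square field_simps)
  also have "\<dots> = c * l / 2"
    using assms(1) by (simp add: \<theta>(3))
  finally have \<theta>N: "\<theta>\<^sup>2 * N / (2 * c) = c * l / 2" .
  have "v * (exp \<theta> - 1 - \<theta>) \<le> 3 * (l / n)"
    using exp_minus_1_minus_scaled_le[OF assms(3-5) \<theta>(1,2)] by (simp add: \<theta>(3))
  then have "n * (v * (exp \<theta> - 1 - \<theta>)) \<le> n * (3 * (l / n))"
    by (rule mult_left_mono) simp
  then have x: "n * v * (exp \<theta> - 1 - \<theta>) \<le> 3 * l"
    using assms(1) by (simp add: mult.assoc)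
  have y: "v * (exp \<eta> - 1 - \<eta>) \<le> 3"
    using exp_minus_1_minus_scaled_le[OF assms(3-5) \<eta>(1)] \<eta>(2) by simp
  have "exp (n * v * (exp \<theta> - 1 - \<theta>) - \<theta>\<^sup>2 * N / (2 * c))
      + n * (2 * exp (v * (exp \<eta> - 1 - \<eta>) - \<eta> * r)) \<le> 1 / (exp 1 * n) powr t"
    unfolding \<theta>N \<eta>(3) using frobenius_tail_terms_le[OF assms(1,2) x[unfolded l_def] y]
    by (simp only: l_def c_def)
  moreover have "(c * n * \<kappa>)\<^sup>2 = n * N"
    by (simp add: N_def power_mult_distrib power2_eq_square)
  ultimately show thesis
    using that[of \<theta> \<eta> r N] \<theta>(1) \<eta>(1) \<open>\<theta> * r = c\<close> unfolding c_def by blast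
qed

lemma frob_ABt_scale_left: "frob_ABt n m (\<lambda>i j. a * B i j) C = \<bar>a\<bar> * frob_ABt n m B C"
proof -
  have "(\<Sum>i<n. \<Sum>k<n. (\<Sum>j<m. a * B i j * C k j)\<^sup>2) = a\<^sup>2 * (\<Sum>i<n. \<Sum>k<n. (\<Sum>j<m. B i j * C k j)\<^sup>2)"
    by (simp add: sum_distrib_left[symmetric] mult.assoc power_mult_distrib)
  then show ?thesis
    by (simp add: frob_ABt_def real_sqrt_mult)
qed

lemma sub_poisson_centered_mgf_le:
  assumes "sub_poisson M Y s2" "integral\<^sup>L M Y = 0" "\<bar>l\<bar> \<le> a"
  shows "integrable M (\<lambda>x. exp (l * Y x))"
    and "(\<integral>x. exp (l * Y x) \<partial>M) \<le> exp (s2 * (exp a - 1 - a))"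
proof -
  from assms(1,2) have "0 \<le> s2"
    and "integrable M (\<lambda>x. exp (l * Y x))"
    and mgf: "(\<integral>x. exp (l * Y x) \<partial>M) \<le> exp (s2 * (exp \<bar>l\<bar> - 1 - \<bar>l\<bar>))"
    unfolding sub_poisson_def by auto
  then show "integrable M (\<lambda>x. exp (l * Y x))"
    by blast
  have "s2 * (exp \<bar>l\<bar> - 1 - \<bar>l\<bar>) \<le> s2 * (exp a - 1 - a)"
    using \<open>0 \<le> s2\<close> assms(3) by (intro mult_left_mono exp_minus_1_minus_mono) auto
  with mgf show "(\<integral>x. exp (l * Y x) \<partial>M) \<le> exp (s2 * (exp a - 1 - a))"
    by (meson exp_le_cancel_iff order_trans)
qed

context prob_space
begin

lemma sub_poisson_mgf_sum_le:
  assumes "finite I" "indep_vars (\<lambda>_. borel) Y I"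
    and "\<And>p. p \<in> I \<Longrightarrow> sub_poisson M (Y p) s2"
    and "\<And>p. p \<in> I \<Longrightarrow> expectation (Y p) = 0"
    and "\<And>p. p \<in> I \<Longrightarrow> \<bar>c p\<bar> \<le> a"
  shows "integrable M (\<lambda>\<omega>. exp (\<Sum>p\<in>I. c p * Y p \<omega>))"
    and "(\<integral>\<omega>. exp (\<Sum>p\<in>I. c p * Y p \<omega>) \<partial>M) \<le> exp (s2 * (exp a - 1 - a)) ^ card I"
proof -
  have indep: "indep_vars (\<lambda>_. borel) (\<lambda>p \<omega>. exp (c p * Y p \<omega>)) I"
    using assms(2) by (rule indep_vars_compose2[where Y = "\<lambda>p y. exp (c p * y)"]) auto
  have int: "integrable M (\<lambda>\<omega>. exp (c p * Y p \<omega>))"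
    and mgf: "(\<integral>\<omega>. exp (c p * Y p \<omega>) \<partial>M) \<le> exp (s2 * (exp a - 1 - a))"
    if "p \<in> I" for p
    using sub_poisson_centered_mgf_le[OF assms(3-5)[OF that]] by auto
  show "integrable M (\<lambda>\<omega>. exp (\<Sum>p\<in>I. c p * Y p \<omega>))"
    using indep_vars_integrable[OF assms(1) indep int] by (simp add: exp_sum[OF assms(1)])
  have "(\<integral>\<omega>. exp (\<Sum>p\<in>I. c p * Y p \<omega>) \<partial>M) = (\<Prod>p\<in>I. \<integral>\<omega>. exp (c p * Y p \<omega>) \<partial>M)"
    using indep_vars_lebesgue_integral[OF assms(1) indep int] by (simp add: exp_sum[OF assms(1)])
  also have "\<dots> \<le> (\<Prod>p\<in>I. exp (s2 * (exp a - 1 - a)))"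
    using mgf by (intro prod_mono conjI integral_nonneg_AE) auto
  finally show "(\<integral>\<omega>. exp (\<Sum>p\<in>I. c p * Y p \<omega>) \<partial>M) \<le> exp (s2 * (exp a - 1 - a)) ^ card I"
    by simp
qed

lemma sub_poisson_cosh_prod_le:
  fixes X :: "'k \<Rightarrow> 'j \<Rightarrow> 'a \<Rightarrow> real"
  assumes "finite K" "finite J" "indep_vars (\<lambda>_. borel) (\<lambda>(k, j). X k j) (K \<times> J)"
    and "\<And>k j. k \<in> K \<Longrightarrow> j \<in> J \<Longrightarrow> sub_poisson M (X k j) s2"
    and "\<And>k j. k \<in> K \<Longrightarrow> j \<in> J \<Longrightarrow> expectation (X k j) = 0"
    and "\<And>k j. k \<in> K \<Longrightarrow> j \<in> J \<Longrightarrow> \<bar>c k j\<bar> \<le> a"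
  shows "integrable M (\<lambda>\<omega>. \<Prod>k\<in>K. cosh (\<Sum>j\<in>J. c k j * X k j \<omega>))"
    and "(\<integral>\<omega>. (\<Prod>k\<in>K. cosh (\<Sum>j\<in>J. c k j * X k j \<omega>)) \<partial>M)
      \<le> exp (s2 * (exp a - 1 - a)) ^ (card K * card J)"
proof -
  define Y where "Y = (\<lambda>(k, j). X k j)"
  define e where "e S = (\<lambda>(k, j). if k \<in> S then c k j else - c k j)" for S
  define F where "F S \<omega> = exp (\<Sum>p\<in>K \<times> J. e S p * Y p \<omega>)" for S \<omega>
  have expand: "(\<Prod>k\<in>K. cosh (\<Sum>j\<in>J. c k j * X k j \<omega>)) = (\<Sum>S\<in>Pow K. F S \<omega>) / 2 ^ card K"
    for \<omega>
    unfolding prod_cosh_eq_sum_exp[OF assms(1)] F_def e_def Y_def sum.cartesian_product'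
    by (intro arg_cong2[where f = "(/)"] sum.cong arg_cong[where f = exp] refl)
      (auto simp: sum_negf sum_distrib_left)
  have Y: "finite (K \<times> J)" "indep_vars (\<lambda>_. borel) Y (K \<times> J)"
    "\<And>p. p \<in> K \<times> J \<Longrightarrow> sub_poisson M (Y p) s2" "\<And>p. p \<in> K \<times> J \<Longrightarrow> expectation (Y p) = 0"
    using assms by (auto simp: Y_def)
  have e: "\<bar>e S p\<bar> \<le> a" if "p \<in> K \<times> J" for S p
    using assms(6) that by (auto simp: e_def)
  have F_int: "integrable M (F S)" for S
    unfolding F_def using Y e by (rule sub_poisson_mgf_sum_le(1))
  have F_le: "(\<integral>\<omega>. F S \<omega> \<partial>M) \<le> exp (s2 * (exp a - 1 - a)) ^ card (K \<times> J)" for S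
    unfolding F_def using Y e by (rule sub_poisson_mgf_sum_le(2))
  show "integrable M (\<lambda>\<omega>. \<Prod>k\<in>K. cosh (\<Sum>j\<in>J. c k j * X k j \<omega>))"
    unfolding expand using F_int by auto
  have "(\<integral>\<omega>. (\<Prod>k\<in>K. cosh (\<Sum>j\<in>J. c k j * X k j \<omega>)) \<partial>M)
      = (\<Sum>S\<in>Pow K. \<integral>\<omega>. F S \<omega> \<partial>M) / 2 ^ card K"
    unfolding expand using F_int by simp
  also have "\<dots> \<le> (\<Sum>S\<in>Pow K. exp (s2 * (exp a - 1 - a)) ^ card (K \<times> J)) / 2 ^ card K"
    using F_le by (intro divide_right_mono sum_mono) auto
  finally show "(\<integral>\<omega>. (\<Prod>k\<in>K. cosh (\<Sum>j\<in>J. c k j * X k j \<omega>)) \<partial>M)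
      \<le> exp (s2 * (exp a - 1 - a)) ^ (card K * card J)"
    using assms(1) by (simp add: card_Pow card_cartesian_product)
qed

lemma sub_poisson_cosh_prod_tail:
  fixes X :: "'k \<Rightarrow> 'j \<Rightarrow> 'a \<Rightarrow> real"
  assumes "finite K" "finite J" "indep_vars (\<lambda>_. borel) (\<lambda>(k, j). X k j) (K \<times> J)"
    and "\<And>k j. k \<in> K \<Longrightarrow> j \<in> J \<Longrightarrow> sub_poisson M (X k j) s2"
    and "\<And>k j. k \<in> K \<Longrightarrow> j \<in> J \<Longrightarrow> expectation (X k j) = 0"
    and "K' \<subseteq> K" "\<And>k j. k \<in> K' \<Longrightarrow> j \<in> J \<Longrightarrow> \<bar>c k j\<bar> \<le> a" "0 < x"
  shows "{\<omega> \<in> space M. x \<le> (\<Prod>k\<in>K'. cosh (\<Sum>j\<in>J. c k j * X k j \<omega>))} \<in> sets M"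
    and "measure M {\<omega> \<in> space M. x \<le> (\<Prod>k\<in>K'. cosh (\<Sum>j\<in>J. c k j * X k j \<omega>))}
      \<le> exp (s2 * (exp a - 1 - a)) ^ (card K' * card J) / x"
proof -
  have K': "finite K'" "indep_vars (\<lambda>_. borel) (\<lambda>(k, j). X k j) (K' \<times> J)"
    "\<And>k j. k \<in> K' \<Longrightarrow> j \<in> J \<Longrightarrow> sub_poisson M (X k j) s2"
    "\<And>k j. k \<in> K' \<Longrightarrow> j \<in> J \<Longrightarrow> expectation (X k j) = 0"
    using assms(1-6) finite_subset by (auto intro: indep_vars_subset)
  have int: "integrable M (\<lambda>\<omega>. \<Prod>k\<in>K'. cosh (\<Sum>j\<in>J. c k j * X k j \<omega>))"
    using K'(1) assms(2) K'(2-4) assms(7) by (rule sub_poisson_cosh_prod_le(1))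
  have le: "(\<integral>\<omega>. (\<Prod>k\<in>K'. cosh (\<Sum>j\<in>J. c k j * X k j \<omega>)) \<partial>M)
      \<le> exp (s2 * (exp a - 1 - a)) ^ (card K' * card J)"
    using K'(1) assms(2) K'(2-4) assms(7) by (rule sub_poisson_cosh_prod_le(2))
  show "{\<omega> \<in> space M. x \<le> (\<Prod>k\<in>K'. cosh (\<Sum>j\<in>J. c k j * X k j \<omega>))} \<in> sets M"
    using borel_measurable_integrable[OF int] by measurable
  have "measure M {\<omega> \<in> space M. x \<le> (\<Prod>k\<in>K'. cosh (\<Sum>j\<in>J. c k j * X k j \<omega>))}
      \<le> (\<integral>\<omega>. (\<Prod>k\<in>K'. cosh (\<Sum>j\<in>J. c k j * X k j \<omega>)) \<partial>M) / x"
    by (rule integral_Markov_inequality_measure[OF int, where A = "space M"])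
      (use \<open>0 < x\<close> in \<open>auto intro!: prod_nonneg\<close>)
  also have "\<dots> \<le> exp (s2 * (exp a - 1 - a)) ^ (card K' * card J) / x"
    using le \<open>0 < x\<close> by (simp add: divide_right_mono)
  finally show "measure M {\<omega> \<in> space M. x \<le> (\<Prod>k\<in>K'. cosh (\<Sum>j\<in>J. c k j * X k j \<omega>))}
      \<le> exp (s2 * (exp a - 1 - a)) ^ (card K' * card J) / x" .
qed

lemma sub_poisson_row_sum_sq_tail:
  fixes X :: "'k \<Rightarrow> 'j \<Rightarrow> 'a \<Rightarrow> real"
  assumes "finite K" "finite J" "indep_vars (\<lambda>_. borel) (\<lambda>(k, j). X k j) (K \<times> J)"
    and "\<And>k j. k \<in> K \<Longrightarrow> j \<in> J \<Longrightarrow> sub_poisson M (X k j) s2"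
    and "\<And>k j. k \<in> K \<Longrightarrow> j \<in> J \<Longrightarrow> expectation (X k j) = 0"
    and "\<And>j. j \<in> J \<Longrightarrow> \<bar>b j\<bar> \<le> 1"
    and "0 \<le> \<theta>" "0 \<le> \<eta>" "2 \<le> c" "\<theta> * r \<le> c"
  shows "measure M {\<omega> \<in> space M. N \<le> (\<Sum>k\<in>K. (\<Sum>j\<in>J. b j * X k j \<omega>)\<^sup>2)}
    \<le> exp (real (card K * card J) * s2 * (exp \<theta> - 1 - \<theta>) - \<theta>\<^sup>2 * N / (2 * c))
      + card K * (2 * exp (real (card J) * s2 * (exp \<eta> - 1 - \<eta>) - \<eta> * r))"
proof -
  define Large where "Large = {\<omega> \<in> space M.
    exp (\<theta>\<^sup>2 * N / (2 * c)) \<le> (\<Prod>k\<in>K. cosh (\<Sum>j\<in>J. (\<theta> * b j) * X k j \<omega>))}"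
  \<comment> \<open>The singleton product lets the cosh-product tail bound cover a single entry as well.\<close>
  define Entry where "Entry k = {\<omega> \<in> space M.
    exp (\<eta> * r) / 2 \<le> (\<Prod>k'\<in>{k}. cosh (\<Sum>j\<in>J. (\<eta> * b j) * X k' j \<omega>))}" for k
  have coeff: "\<And>k j. k \<in> K' \<Longrightarrow> j \<in> J \<Longrightarrow> \<bar>\<zeta> * b j\<bar> \<le> \<zeta>" if "0 \<le> \<zeta>" for \<zeta> and K' :: "'k set"
    using assms(6) that by (auto simp: abs_mult intro: mult_left_le)
  have "0 < exp (\<theta>\<^sup>2 * N / (2 * c))" "0 < exp (\<eta> * r) / 2"
    by simp_all
  note Large_tail = assms(1-5) subset_refl coeff[OF \<open>0 \<le> \<theta>\<close>] this(1)
  have Large_sets: "Large \<in> sets M"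
    unfolding Large_def using Large_tail by (rule sub_poisson_cosh_prod_tail(1))
  have Large_le: "measure M Large
      \<le> exp (s2 * (exp \<theta> - 1 - \<theta>)) ^ (card K * card J) / exp (\<theta>\<^sup>2 * N / (2 * c))"
    unfolding Large_def using Large_tail by (rule sub_poisson_cosh_prod_tail(2))
  have Entry_sets: "Entry k \<in> sets M"
    and Entry_le: "measure M (Entry k)
      \<le> exp (s2 * (exp \<eta> - 1 - \<eta>)) ^ (card {k} * card J) / (exp (\<eta> * r) / 2)"
    if "k \<in> K" for k
  proof -
    note Entry_tail = assms(1-5) that[THEN insert_subsetI, OF empty_subsetI] coeff[OF \<open>0 \<le> \<eta>\<close>]
      \<open>0 < exp (\<eta> * r) / 2\<close>
    show "Entry k \<in> sets M"
      unfolding Entry_def using Entry_tail by (rule sub_poisson_cosh_prod_tail(1))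
    show "measure M (Entry k)
        \<le> exp (s2 * (exp \<eta> - 1 - \<eta>)) ^ (card {k} * card J) / (exp (\<eta> * r) / 2)"
      unfolding Entry_def using Entry_tail by (rule sub_poisson_cosh_prod_tail(2))
  qed
  have "{\<omega> \<in> space M. N \<le> (\<Sum>k\<in>K. (\<Sum>j\<in>J. b j * X k j \<omega>)\<^sup>2)} \<subseteq> Large \<union> (\<Union>k\<in>K. Entry k)"
  proof
    fix \<omega>
    assume "\<omega> \<in> {\<omega> \<in> space M. N \<le> (\<Sum>k\<in>K. (\<Sum>j\<in>J. b j * X k j \<omega>)\<^sup>2)}"
    with sum_sq_ge_imp_cosh_large[OF assms(1,7-10)] show "\<omega> \<in> Large \<union> (\<Union>k\<in>K. Entry k)"
      by (fastforce simp: Large_def Entry_def sum_distrib_left mult.assoc)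
  qed
  then have "measure M {\<omega> \<in> space M. N \<le> (\<Sum>k\<in>K. (\<Sum>j\<in>J. b j * X k j \<omega>)\<^sup>2)}
      \<le> measure M (Large \<union> (\<Union>k\<in>K. Entry k))"
    using Large_sets Entry_sets assms(1) by (intro finite_measure_mono) auto
  also have "\<dots> \<le> measure M Large + (\<Sum>k\<in>K. measure M (Entry k))"
    using Large_sets Entry_sets assms(1)
    by (intro order_trans[OF measure_Un_le] add_left_mono finite_measure_subadditive_finite) auto
  also have "\<dots> \<le> exp (real (card K * card J) * s2 * (exp \<theta> - 1 - \<theta>) - \<theta>\<^sup>2 * N / (2 * c))
      + card K * (2 * exp (real (card J) * s2 * (exp \<eta> - 1 - \<eta>) - \<eta> * r))"
    using Large_le by (intro add_mono order_trans[OF sum_mono[OF Entry_le]])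
      (auto simp: exp_diff exp_of_nat_mult[symmetric] ac_simps)
  finally show ?thesis .
qed

lemma sub_poisson_bilinear_sum_sq_tail:
  fixes X :: "'k \<Rightarrow> 'j \<Rightarrow> 'a \<Rightarrow> real" and b :: "'i \<Rightarrow> 'j \<Rightarrow> real"
  assumes "finite I" "I \<noteq> {}" "finite K" "finite J"
    and "indep_vars (\<lambda>_. borel) (\<lambda>(k, j). X k j) (K \<times> J)"
    and "\<And>k j. k \<in> K \<Longrightarrow> j \<in> J \<Longrightarrow> sub_poisson M (X k j) s2"
    and "\<And>k j. k \<in> K \<Longrightarrow> j \<in> J \<Longrightarrow> expectation (X k j) = 0"
    and "\<And>i j. i \<in> I \<Longrightarrow> j \<in> J \<Longrightarrow> \<bar>b i j\<bar> \<le> 1"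
    and "0 \<le> \<theta>" "0 \<le> \<eta>" "2 \<le> c" "\<theta> * r \<le> c"
  shows "measure M {\<omega> \<in> space M. real (card I) * N \<le> (\<Sum>i\<in>I. \<Sum>k\<in>K. (\<Sum>j\<in>J. b i j * X k j \<omega>)\<^sup>2)}
    \<le> card I * (exp (real (card K * card J) * s2 * (exp \<theta> - 1 - \<theta>) - \<theta>\<^sup>2 * N / (2 * c))
      + card K * (2 * exp (real (card J) * s2 * (exp \<eta> - 1 - \<eta>) - \<eta> * r)))"
proof -
  define Row where "Row i = {\<omega> \<in> space M. N \<le> (\<Sum>k\<in>K. (\<Sum>j\<in>J. b i j * X k j \<omega>)\<^sup>2)}" for i
  have Row_sets: "Row i \<in> sets M" for i
  proof -
    have "(\<lambda>\<omega>. \<Sum>k\<in>K. (\<Sum>j\<in>J. b i j * X k j \<omega>)\<^sup>2) \<in> borel_measurable M"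
      using assms(6)
      by (intro borel_measurable_sum borel_measurable_power borel_measurable_times borel_measurable_const)
        (auto simp: sub_poisson_def)
    then show ?thesis
      unfolding Row_def by measurable
  qed
  have "{\<omega> \<in> space M. real (card I) * N \<le> (\<Sum>i\<in>I. \<Sum>k\<in>K. (\<Sum>j\<in>J. b i j * X k j \<omega>)\<^sup>2)} \<subseteq> (\<Union>i\<in>I. Row i)"
  proof safe
    fix \<omega>
    assume "\<omega> \<in> space M" and large: "real (card I) * N \<le> (\<Sum>i\<in>I. \<Sum>k\<in>K. (\<Sum>j\<in>J. b i j * X k j \<omega>)\<^sup>2)"
    show "\<omega> \<in> (\<Union>i\<in>I. Row i)"
    proof (rule ccontr)
      assume "\<omega> \<notin> (\<Union>i\<in>I. Row i)"
      then have "(\<Sum>i\<in>I. \<Sum>k\<in>K. (\<Sum>j\<in>J. b i j * X k j \<omega>)\<^sup>2) < real (card I) * N"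
        using \<open>\<omega> \<in> space M\<close> assms(1,2)
        by (intro sum_bounded_above_strict) (auto simp: Row_def card_gt_0_iff)
      with large show False
        by simp
    qed
  qed
  then have "measure M {\<omega> \<in> space M. real (card I) * N \<le> (\<Sum>i\<in>I. \<Sum>k\<in>K. (\<Sum>j\<in>J. b i j * X k j \<omega>)\<^sup>2)}
      \<le> measure M (\<Union>i\<in>I. Row i)"
    using Row_sets assms(1) by (intro finite_measure_mono) auto
  also have "\<dots> \<le> (\<Sum>i\<in>I. measure M (Row i))"
    using Row_sets assms(1) by (intro finite_measure_subadditive_finite) auto
  also have "\<dots> \<le> (\<Sum>i\<in>I. exp (real (card K * card J) * s2 * (exp \<theta> - 1 - \<theta>) - \<theta>\<^sup>2 * N / (2 * c))
      + card K * (2 * exp (real (card J) * s2 * (exp \<eta> - 1 - \<eta>) - \<eta> * r)))"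
    unfolding Row_def using assms(3-12)
    by (intro sum_mono sub_poisson_row_sum_sq_tail) auto
  finally show ?thesis
    by simp
qed

lemma sub_poisson_bilinear_frobenius_tail:
  fixes X :: "nat \<Rightarrow> nat \<Rightarrow> 'a \<Rightarrow> real" and b :: "nat \<Rightarrow> nat \<Rightarrow> real"
  assumes "1 \<le> n" "indep_vars (\<lambda>_. borel) (\<lambda>(k, j). X k j) ({..<n} \<times> {..<m})"
    and "\<And>k j. k < n \<Longrightarrow> j < m \<Longrightarrow> sub_poisson M (X k j) s2"
    and "\<And>k j. k < n \<Longrightarrow> j < m \<Longrightarrow> expectation (X k j) = 0"
    and "\<And>i j. i < n \<Longrightarrow> j < m \<Longrightarrow> \<bar>b i j\<bar> \<le> 1"
    and "1 \<le> t"
  shows "measure M {\<omega> \<in> space M. 34 * (1 + t) * n * max (sqrt (m * s2)) (2/3)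
      \<le> frob_ABt n m b (\<lambda>k j. X k j \<omega>)} \<le> n / (exp 1 * n) powr t"
proof -
  define \<kappa> where "\<kappa> = max (sqrt (m * s2)) (2/3)"
  define c where "c = 34 * (1 + t)"
  have "0 \<le> m * s2"
    using assms(3)[of 0 0] assms(1) by (cases m) (auto simp: sub_poisson_def)
  moreover have "m * s2 \<le> \<kappa>\<^sup>2"
    by (rule sqrt_le_D) (simp add: \<kappa>_def)
  moreover have "2/3 \<le> \<kappa>"
    by (simp add: \<kappa>_def)
  ultimately obtain \<theta> \<eta> r N :: real where "0 \<le> \<theta>" "0 \<le> \<eta>" "\<theta> * r = c" and sq: "(c * n * \<kappa>)\<^sup>2 = n * N"
    and bound: "exp (n * (m * s2) * (exp \<theta> - 1 - \<theta>) - \<theta>\<^sup>2 * N / (2 * c))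
      + n * (2 * exp (m * s2 * (exp \<eta> - 1 - \<eta>) - \<eta> * r)) \<le> 1 / (exp 1 * n) powr t"
    unfolding c_def by (rule frobenius_tail_parameters[OF assms(1,6)])
  have "c * n * \<kappa> \<le> sqrt Q \<longleftrightarrow> n * N \<le> Q" for Q
    using sq \<open>2/3 \<le> \<kappa>\<close> assms(6) real_le_rsqrt[of "c * n * \<kappa>" Q] sqrt_ge_absD[of "c * n * \<kappa>" Q]
    by (auto simp: c_def)
  then have "measure M {\<omega> \<in> space M. c * n * \<kappa> \<le> frob_ABt n m b (\<lambda>k j. X k j \<omega>)}
      = measure M {\<omega> \<in> space M. real (card {..<n}) * N \<le> (\<Sum>i<n. \<Sum>k<n. (\<Sum>j<m. b i j * X k j \<omega>)\<^sup>2)}"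
    by (simp add: frob_ABt_def)
  also have "\<dots> \<le> card {..<n} * (exp (real (card {..<n} * card {..<m}) * s2 * (exp \<theta> - 1 - \<theta>) - \<theta>\<^sup>2 * N / (2 * c))
      + card {..<n} * (2 * exp (real (card {..<m}) * s2 * (exp \<eta> - 1 - \<eta>) - \<eta> * r)))"
    using assms \<open>0 \<le> \<theta>\<close> \<open>0 \<le> \<eta>\<close> \<open>\<theta> * r = c\<close>
    by (intro sub_poisson_bilinear_sum_sq_tail) (auto simp: c_def lessThan_empty_iff)
  also have "\<dots> \<le> n / (exp 1 * n) powr t"
    using mult_left_mono[OF bound, of n] by (simp add: mult.assoc)
  finally show ?thesis
    unfolding c_def[symmetric] \<kappa>_def[symmetric] .
qed

end

theorem lemmaC1:
  fixes M :: "'a measure" and X :: "nat \<Rightarrow> nat \<Rightarrow> 'a \<Rightarrow> real"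
    and A :: "nat \<Rightarrow> nat \<Rightarrow> real" and n m :: nat and \<sigma> t :: real
  assumes "prob_space M"
    and "n \<ge> 1" and "m \<ge> 1" and "\<sigma> > 0"
    and "prob_space.indep_vars M (\<lambda>_. borel) (\<lambda>(i, j). X i j) ({..<n} \<times> {..<m})"
    and "\<And>i j. i < n \<Longrightarrow> j < m \<Longrightarrow> sub_poisson M (X i j) (\<sigma>\<^sup>2)"
    and "\<And>i j. i < n \<Longrightarrow> j < m \<Longrightarrow> prob_space.expectation M (X i j) = 0"
    and "\<And>i j. i < n \<Longrightarrow> j < m \<Longrightarrow> \<bar>A i j\<bar> \<le> \<sigma>\<^sup>2"
    and "t \<ge> 1"
  shows "measure M {\<omega> \<in> space M.
           frob_ABt n m A (\<lambda>k j. X k j \<omega>)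
             \<ge> 34 * (1 + t) * real n * \<sigma>\<^sup>2 * max (sqrt (real m * \<sigma>\<^sup>2)) (2/3)}
         \<le> real n / (exp 1 * real n) powr t"
proof -
  interpret prob_space M
    by (rule assms(1))
  define b where "b i j = A i j / \<sigma>\<^sup>2" for i j
  have "\<bar>b i j\<bar> \<le> 1" if "i < n" "j < m" for i j
    using assms(8)[OF that] assms(4) by (simp add: b_def abs_div)
  note tail = sub_poisson_bilinear_frobenius_tail[OF assms(2,5,6,7) this assms(9)]
  have scale: "frob_ABt n m A Y = \<sigma>\<^sup>2 * frob_ABt n m b Y" for Y
    using assms(4) frob_ABt_scale_left[of n m "\<sigma>\<^sup>2" b Y] by (simp add: b_def)
  have "34 * (1 + t) * n * \<sigma>\<^sup>2 * K \<le> frob_ABt n m A Y \<longleftrightarrow> 34 * (1 + t) * n * K \<le> frob_ABt n m b Y"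
    for Y K
  proof -
    have "34 * (1 + t) * n * \<sigma>\<^sup>2 * K = \<sigma>\<^sup>2 * (34 * (1 + t) * n * K)"
      by (simp add: ac_simps)
    then show ?thesis
      using assms(4) by (simp add: scale mult.assoc)
  qed
  with tail show ?thesis
    by simp
qed

end
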